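(* Let $G$ be a connected finite simple graph on $n$ vertices. Then $\ell(G)=n-\omega(G)+1$ if and only if $G$ is a WL-graph.
   Context: $\ell(G)$ is the length (number of edges) of a longest induced path in $G$; $\omega(G)$ is the clique number of $G$ (maximum size of a set of pairwise adjacent vertices). WL-graph: a graph $G$ is a WL-graph if there exist positive integers $\ell,\omega$ with $\omega\ge2$ such that $G=P\cup K\cup H$ (union of graphs: union of vertex sets and of edge sets), where (i) $P$ is a path graph with consecutive vertices $v_0,v_1,\dots,v_\ell$; (ii) $K$ is a complete graph on the vertex set $\{v_t,v_{t+1},u_1,\dots,u_{\omega-2}\}$ for some $0\le t<\ell$, with $V(P)\cap V(K)=\{v_t,v_{t+1}\}$; (iii) $H$ is a graph with vertex set $V(P)\cup V(K)$ and edge set contained in $\{\{v_i,u_j\}:0\le i\le\ell,\ 1\le j\le\omega-2\}$. *)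

theory Defs
  imports Main
begin

definition simple_graph :: "'a set \<Rightarrow> 'a set set \<Rightarrow> bool" where
  "simple_graph V E \<longleftrightarrow> finite V \<and>
     (\<forall>e\<in>E. \<exists>x y. e = {x, y} \<and> x \<noteq> y \<and> x \<in> V \<and> y \<in> V)"

definition adj :: "'a set set \<Rightarrow> 'a \<Rightarrow> 'a \<Rightarrow> bool" where
  "adj E x y \<longleftrightarrow> {x, y} \<in> E"

definition connected_graph :: "'a set \<Rightarrow> 'a set set \<Rightarrow> bool" where
  "connected_graph V E \<longleftrightarrow> V \<noteq> {} \<and> (\<forall>x\<in>V. \<forall>y\<in>V. (adj E)\<^sup>*\<^sup>* x y)"

definition induced_path :: "'a set \<Rightarrow> 'a set set \<Rightarrow> 'a list \<Rightarrow> bool" where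
  "induced_path V E xs \<longleftrightarrow> xs \<noteq> [] \<and> distinct xs \<and> set xs \<subseteq> V \<and>
     (\<forall>i j. i < length xs \<and> j < length xs \<longrightarrow>
        (adj E (xs ! i) (xs ! j) \<longleftrightarrow> (i = j + 1 \<or> j = i + 1)))"

definition longest_induced_path :: "'a set \<Rightarrow> 'a set set \<Rightarrow> nat" where
  "longest_induced_path V E = Max {length xs - 1 | xs. induced_path V E xs}"

definition clique :: "'a set \<Rightarrow> 'a set set \<Rightarrow> 'a set \<Rightarrow> bool" where
  "clique V E S \<longleftrightarrow> S \<subseteq> V \<and> (\<forall>x\<in>S. \<forall>y\<in>S. x \<noteq> y \<longrightarrow> adj E x y)"

definition clique_number :: "'a set \<Rightarrow> 'a set set \<Rightarrow> nat" where
  "clique_number V E = Max {card S | S. clique V E S}"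

definition WL_graph :: "'a set \<Rightarrow> 'a set set \<Rightarrow> bool" where
  "WL_graph V E \<longleftrightarrow>
    (\<exists>(l::nat) (w::nat) (t::nat) (v::nat \<Rightarrow> 'a) (u::nat \<Rightarrow> 'a) H.
       1 \<le> l \<and> 2 \<le> w \<and> t < l \<and>
       inj_on v {0..l} \<and> inj_on u {1..w-2} \<and>
       v ` {0..l} \<inter> u ` {1..w-2} = {} \<and>
       V = v ` {0..l} \<union> u ` {1..w-2} \<and>
       H \<subseteq> {{v i, u j} | i j. i \<le> l \<and> 1 \<le> j \<and> j \<le> w - 2} \<and>
       E = {{v i, v (i + 1)} | i. i < l}
           \<union> {{x, y} | x y. x \<in> {v t, v (t + 1)} \<union> u ` {1..w-2} \<and>
                             y \<in> {v t, v (t + 1)} \<union> u ` {1..w-2} \<and> x \<noteq> y}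
           \<union> H)"

end

theory Submission
  imports Defs
begin

text \<open>An induced path meets a clique in at most two vertices: clique vertices on the path
  are pairwise adjacent, hence pairwise consecutive on it. So a longest induced path
  (\<open>\<ell> + 1\<close> vertices) and a maximum clique (\<open>\<omega>\<close> vertices) satisfy
  \<open>\<ell> + 1 + \<omega> \<le> n + 2\<close>. Equality forces them to cover all vertices and to share exactly
  one edge of the path; every other edge then lies on the path, inside the clique,
  or joins the path to the rest of the clique, which is a WL decomposition. Conversely,
  the spine and the clique of a WL decomposition attain the bound.\<close>

lemma simple_graph_finite: "simple_graph V E \<Longrightarrow> finite V"
  unfolding simple_graph_def by blast

lemma simple_graph_not_adj_self: "simple_graph V E \<Longrightarrow> \<not> adj E x x"
  unfolding simple_graph_def adj_def by (metis doubleton_eq_iff)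

lemma simple_graph_edgeE:
  assumes "simple_graph V E" and "e \<in> E"
  obtains x y where "e = {x, y}" "x \<noteq> y" "x \<in> V" "y \<in> V"
  using assms unfolding simple_graph_def by blast

lemma induced_path_adj_iff:
  assumes "induced_path V E xs" and "i < length xs" and "j < length xs"
  shows "adj E (xs ! i) (xs ! j) \<longleftrightarrow> i = j + 1 \<or> j = i + 1"
  using assms unfolding induced_path_def by blast

lemma induced_path_adjE:
  assumes "induced_path V E xs" and "x \<in> set xs" and "y \<in> set xs" and "adj E x y"
  obtains i where "i + 1 < length xs" and "{x, y} = {xs ! i, xs ! (i + 1)}"
proof -
  obtain i j where ij: "i < length xs" "j < length xs" "x = xs ! i" "y = xs ! j"
    using assms(2,3) by (metis in_set_conv_nth)
  then have "i = j + 1 \<or> j = i + 1"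
    using induced_path_adj_iff[OF assms(1)] assms(4) by metis
  with ij that show thesis by (auto simp: insert_commute)
qed

lemma induced_path_length_le_card:
  assumes "finite V" and "induced_path V E xs"
  shows "length xs \<le> card V"
  using assms unfolding induced_path_def by (metis card_mono distinct_card)

lemma clique_card_le_card:
  assumes "finite V" and "clique V E S"
  shows "card S \<le> card V"
  using assms unfolding clique_def by (simp add: card_mono)

lemma card_le_2_if_no_three_distinct:
  assumes "\<And>x y z. x \<in> A \<Longrightarrow> y \<in> A \<Longrightarrow> z \<in> A \<Longrightarrow> x \<noteq> y \<Longrightarrow> y \<noteq> z \<Longrightarrow> x \<noteq> z \<Longrightarrow> False"
  shows "card A \<le> 2"
proof (rule ccontr)
  assume "\<not> card A \<le> 2"
  then have "3 \<le> card A" by simp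
  then obtain B where "B \<subseteq> A" and "card B = 3" by (rule obtain_subset_with_card_n)
  then obtain x y z where "{x, y, z} \<subseteq> A" and "x \<noteq> y" "y \<noteq> z" "x \<noteq> z"
    unfolding card_3_iff by blast
  then show False using assms[of x y z] by blast
qed

lemma card_induced_path_inter_clique_le_2:
  assumes p: "induced_path V E xs" and c: "clique V E S"
  shows "card (set xs \<inter> S) \<le> 2"
proof (rule card_le_2_if_no_three_distinct)
  fix x y z assume xyz: "x \<in> set xs \<inter> S" "y \<in> set xs \<inter> S" "z \<in> set xs \<inter> S"
    and distinct: "x \<noteq> y" "y \<noteq> z" "x \<noteq> z"
  then obtain i j k where ijk: "i < length xs" "j < length xs" "k < length xs"
    and nth: "x = xs ! i" "y = xs ! j" "z = xs ! k"
    by (auto simp: in_set_conv_nth)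
  have "adj E x y" "adj E y z" "adj E x z"
    using c xyz distinct unfolding clique_def by auto
  then have "i = j + 1 \<or> j = i + 1" "j = k + 1 \<or> k = j + 1" "i = k + 1 \<or> k = i + 1"
    using induced_path_adj_iff[OF p] ijk unfolding nth by blast+
  then show False by presburger
qed

lemma length_induced_path_plus_card_clique:
  assumes "finite V" and "induced_path V E xs" and "clique V E S"
  shows "length xs + card S = card (set xs \<union> S) + card (set xs \<inter> S)"
proof -
  have "finite S" using assms(1,3) unfolding clique_def by (auto intro: finite_subset)
  moreover have "card (set xs) = length xs"
    using assms(2) unfolding induced_path_def by (simp add: distinct_card)
  ultimately show ?thesis using card_Un_Int[of "set xs" S] by simp
qed

lemma induced_path_clique_card_bound:
  assumes "finite V" and "induced_path V E xs" and "clique V E S"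
  shows "length xs + card S \<le> card V + 2"
proof -
  have "set xs \<union> S \<subseteq> V" using assms(2,3) unfolding induced_path_def clique_def by blast
  then have "card (set xs \<union> S) \<le> card V" using assms(1) by (rule card_mono[rotated])
  then show ?thesis
    using length_induced_path_plus_card_clique[OF assms]
      card_induced_path_inter_clique_le_2[OF assms(2,3)] by linarith
qed

lemma induced_path_clique_card_bound_eqD:
  assumes "finite V" and "induced_path V E xs" and "clique V E S"
    and "length xs + card S = card V + 2"
  shows "set xs \<union> S = V" and "card (set xs \<inter> S) = 2"
proof -
  have sub: "set xs \<union> S \<subseteq> V" using assms(2,3) unfolding induced_path_def clique_def by blast
  then have "card (set xs \<union> S) \<le> card V" using assms(1) by (rule card_mono[rotated])
  moreover note length_induced_path_plus_card_clique[OF assms(1-3)]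
    card_induced_path_inter_clique_le_2[OF assms(2,3)]
  ultimately have card_Un: "card (set xs \<union> S) = card V" and card_Int: "card (set xs \<inter> S) = 2"
    using assms(4) by linarith+
  show "card (set xs \<inter> S) = 2" by (fact card_Int)
  show "set xs \<union> S = V" by (rule card_subset_eq[OF assms(1) sub card_Un])
qed

lemma finite_induced_path_lengths:
  assumes "finite V"
  shows "finite {length xs - 1 | xs. induced_path V E xs}"
  by (rule finite_subset[of _ "{..card V}"])
    (auto dest: induced_path_length_le_card[OF assms])

lemma induced_path_length_le_longest:
  assumes "finite V" and "induced_path V E xs"
  shows "length xs - 1 \<le> longest_induced_path V E"
  unfolding longest_induced_path_def
  using assms by (intro Max_ge finite_induced_path_lengths) auto

lemma longest_induced_pathE:
  assumes "simple_graph V E" and "V \<noteq> {}"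
  obtains xs where "induced_path V E xs" and "longest_induced_path V E = length xs - 1"
proof -
  obtain x where "x \<in> V" using assms(2) by blast
  then have "induced_path V E [x]"
    using simple_graph_not_adj_self[OF assms(1)] unfolding induced_path_def by auto
  moreover have "finite V" using assms(1) by (rule simple_graph_finite)
  ultimately have "longest_induced_path V E \<in> {length xs - 1 | xs. induced_path V E xs}"
    unfolding longest_induced_path_def by (intro Max_in finite_induced_path_lengths) auto
  with that show thesis by blast
qed

lemma finite_clique_cards:
  assumes "finite V"
  shows "finite {card S | S. clique V E S}"
  by (rule finite_subset[of _ "{..card V}"]) (auto dest: clique_card_le_card[OF assms])

lemma clique_card_le_clique_number:
  assumes "finite V" and "clique V E S"
  shows "card S \<le> clique_number V E"
  unfolding clique_number_def using assms by (intro Max_ge finite_clique_cards) auto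

lemma clique_numberE:
  assumes "finite V"
  obtains S where "clique V E S" and "clique_number V E = card S"
proof -
  have "clique V E {}" unfolding clique_def by blast
  then have "clique_number V E \<in> {card S | S. clique V E S}"
    unfolding clique_number_def using assms by (intro Max_in finite_clique_cards) auto
  with that show thesis by blast
qed

lemma clique_number_le_card:
  assumes "finite V"
  shows "clique_number V E \<le> card V"
  using clique_numberE[OF assms] clique_card_le_card[OF assms] by metis

lemma longest_induced_path_plus_clique_number_le:
  assumes "simple_graph V E" and "V \<noteq> {}"
  shows "longest_induced_path V E + clique_number V E \<le> card V + 1"
proof -
  have fin: "finite V" using assms(1) by (rule simple_graph_finite)
  obtain xs where xs: "induced_path V E xs" "longest_induced_path V E = length xs - 1"
    using longest_induced_pathE[OF assms] .
  obtain S where S: "clique V E S" "clique_number V E = card S"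
    using clique_numberE[OF fin] .
  have "0 < length xs" using xs(1) unfolding induced_path_def by blast
  then show ?thesis
    using xs(2) S(2) induced_path_clique_card_bound[OF fin xs(1) S(1)] by linarith
qed

locale WL_decomposition =
  fixes V :: "'a set" and E :: "'a set set" and l w t :: nat and v u :: "nat \<Rightarrow> 'a"
    and H :: "'a set set"
  assumes path_length_ge_1: "1 \<le> l" and clique_size_ge_2: "2 \<le> w" and t_less: "t < l"
    and inj_v: "inj_on v {0..l}" and inj_u: "inj_on u {1..w-2}"
    and disjoint: "v ` {0..l} \<inter> u ` {1..w-2} = {}"
    and vertices: "V = v ` {0..l} \<union> u ` {1..w-2}"
    and H_subset: "H \<subseteq> {{v i, u j} | i j. i \<le> l \<and> 1 \<le> j \<and> j \<le> w - 2}"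
    and edges: "E = {{v i, v (i + 1)} | i. i < l}
           \<union> {{x, y} | x y. x \<in> {v t, v (t + 1)} \<union> u ` {1..w-2} \<and>
                             y \<in> {v t, v (t + 1)} \<union> u ` {1..w-2} \<and> x \<noteq> y}
           \<union> H"

lemma WL_graph_iff_decomposition:
  "WL_graph V E \<longleftrightarrow> (\<exists>l w t v u H. WL_decomposition V E l w t v u H)"
  unfolding WL_graph_def WL_decomposition_def by blast

context WL_decomposition
begin

abbreviation U :: "'a set" where "U \<equiv> u ` {1..w-2}"

abbreviation K :: "'a set" where "K \<equiv> {v t, v (t + 1)} \<union> U"

abbreviation spine :: "'a list" where "spine \<equiv> map v [0..<l + 1]"

lemma v_eq_iff: "i \<le> l \<Longrightarrow> j \<le> l \<Longrightarrow> v i = v j \<longleftrightarrow> i = j"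
  using inj_v by (auto dest: inj_onD)

lemma v_notin_U: "i \<le> l \<Longrightarrow> v i \<notin> U"
  using disjoint by (auto simp: disjoint_iff)

lemma adj_v_iff:
  assumes "i \<le> l" and "j \<le> l"
  shows "adj E (v i) (v j) \<longleftrightarrow> i = j + 1 \<or> j = i + 1"
proof
  assume "adj E (v i) (v j)"
  then consider (path) k where "k < l" "{v i, v j} = {v k, v (k + 1)}"
    | (clique) "v i \<noteq> v j" "v i \<in> K" "v j \<in> K"
    | (cross) a b where "{v i, v j} = {v a, u b}" "1 \<le> b" "b \<le> w - 2"
    using H_subset unfolding adj_def edges by (auto simp: doubleton_eq_iff)
  then show "i = j + 1 \<or> j = i + 1"
  proof cases
    case path
    then show ?thesis using assms v_eq_iff by (auto simp: doubleton_eq_iff)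
  next
    case clique
    then have "i \<in> {t, t + 1}" "j \<in> {t, t + 1}" "i \<noteq> j"
      using assms t_less v_eq_iff v_notin_U by auto
    then show ?thesis by auto
  next
    case cross
    then have "u b = v i \<or> u b = v j" and "u b \<in> U" by (auto simp: doubleton_eq_iff)
    then show ?thesis using assms v_notin_U by metis
  qed
next
  assume "i = j + 1 \<or> j = i + 1"
  then have "{v i, v j} \<in> {{v k, v (k + 1)} | k. k < l}"
    using assms by (auto simp: insert_commute)
  then show "adj E (v i) (v j)" unfolding adj_def edges by blast
qed

lemma induced_path_spine: "induced_path V E spine"
  unfolding induced_path_def
proof (intro conjI allI impI)
  show "distinct spine"
    using inj_v by (simp add: distinct_map atLeastLessThanSuc_atLeastAtMost del: upt_Suc)
  show "set spine \<subseteq> V"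
    using vertices by (auto simp: atLeastLessThanSuc_atLeastAtMost simp del: upt_Suc)
  fix i j assume "i < length spine \<and> j < length spine"
  then show "adj E (spine ! i) (spine ! j) \<longleftrightarrow> i = j + 1 \<or> j = i + 1"
    using adj_v_iff by (simp add: nth_map_upt del: upt_Suc)
qed simp

lemma clique_K: "clique V E K"
  using vertices t_less unfolding clique_def adj_def edges by auto

lemma card_U: "card U = w - 2"
  using inj_u by (simp add: card_image)

lemma card_K: "card K = w"
proof -
  have "v t \<noteq> v (t + 1)" and "v t \<notin> U" and "v (t + 1) \<notin> U"
    using t_less v_eq_iff v_notin_U by auto
  then show ?thesis using card_U clique_size_ge_2 by (simp add: card_insert_if)
qed

lemma card_vertices: "card V + 1 = l + w"
proof -
  have "card V = card (v ` {0..l}) + card U"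
    unfolding vertices using disjoint by (intro card_Un_disjoint) auto
  also have "card (v ` {0..l}) = l + 1" using inj_v by (simp add: card_image)
  finally show ?thesis using card_U clique_size_ge_2 by simp
qed

lemma longest_induced_path_plus_clique_number:
  assumes "simple_graph V E"
  shows "longest_induced_path V E + clique_number V E = card V + 1"
proof -
  have fin: "finite V" using assms by (rule simple_graph_finite)
  have "l \<le> longest_induced_path V E"
    using induced_path_length_le_longest[OF fin induced_path_spine] by simp
  moreover have "w \<le> clique_number V E"
    using clique_card_le_clique_number[OF fin clique_K] card_K by simp
  moreover have "v 0 \<in> V" using vertices by simp
  then have "longest_induced_path V E + clique_number V E \<le> card V + 1"
    by (intro longest_induced_path_plus_clique_number_le[OF assms]) blast
  ultimately show ?thesis using card_vertices by linarith
qed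

end

lemma edges_of_induced_path_and_clique_cover:
  assumes "simple_graph V E" and p: "induced_path V E xs" and c: "clique V E S"
    and cover: "V = set xs \<union> S"
  shows "E = {{xs ! i, xs ! (i + 1)} | i. i + 1 < length xs}
           \<union> {{x, y} | x y. x \<in> S \<and> y \<in> S \<and> x \<noteq> y}
           \<union> {e \<in> E. \<exists>x \<in> set xs. \<exists>y \<in> S - set xs. e = {x, y}}"
    (is "E = ?path \<union> ?clique \<union> ?cross")
proof
  have "?path \<subseteq> E" using induced_path_adj_iff[OF p] unfolding adj_def by fastforce
  moreover have "?clique \<subseteq> E" using c unfolding clique_def adj_def by blast
  ultimately show "?path \<union> ?clique \<union> ?cross \<subseteq> E" by blast
next
  show "E \<subseteq> ?path \<union> ?clique \<union> ?cross"
  proof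
    fix e assume "e \<in> E"
    then obtain x y where e: "e = {x, y}" "x \<noteq> y" "x \<in> V" "y \<in> V" and "adj E x y"
      using assms(1) unfolding adj_def by (metis simple_graph_edgeE)
    consider "x \<in> set xs" "y \<in> set xs" | "x \<in> S" "y \<in> S"
      | "x \<in> set xs" "y \<in> S - set xs" | "y \<in> set xs" "x \<in> S - set xs"
      using cover e by blast
    then show "e \<in> ?path \<union> ?clique \<union> ?cross"
    proof cases
      case 1
      then obtain i where "i + 1 < length xs" "{x, y} = {xs ! i, xs ! (i + 1)}"
        using induced_path_adjE[OF p _ _ \<open>adj E x y\<close>] by blast
      then show ?thesis unfolding e by blast
    next
      case 2
      then show ?thesis using e by blast
    next
      case 3
      then show ?thesis using \<open>e \<in> E\<close> e by blast
    next
      case 4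
      moreover have "e = {y, x}" using e(1) by (simp add: insert_commute)
      ultimately show ?thesis using \<open>e \<in> E\<close> by blast
    qed
  qed
qed

lemma WL_graph_if_extremal:
  assumes s: "simple_graph V E" and p: "induced_path V E xs" and c: "clique V E S"
    and extremal: "length xs + card S = card V + 2"
  shows "WL_graph V E"
proof -
  have fin: "finite V" using s by (rule simple_graph_finite)
  have "finite S" using fin c unfolding clique_def by (auto intro: finite_subset)
  have cover: "V = set xs \<union> S" and two: "card (set xs \<inter> S) = 2"
    using induced_path_clique_card_bound_eqD[OF fin p c extremal] by auto
  then obtain a b where ab: "set xs \<inter> S = {a, b}" "a \<noteq> b" unfolding card_2_iff by blast
  then have "a \<in> set xs" "b \<in> set xs" "adj E a b" using c unfolding clique_def by auto
  then obtain t where t: "t + 1 < length xs" and ends: "set xs \<inter> S = {xs ! t, xs ! (t + 1)}"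
    using induced_path_adjE[OF p] ab(1) by metis
  define l where "l = length xs - 1"
  define w where "w = card S"
  define R where "R = S - set xs"
  define H where "H = {e \<in> E. \<exists>x \<in> set xs. \<exists>y \<in> R. e = {x, y}}"
  have "2 \<le> w" unfolding w_def two[symmetric] using \<open>finite S\<close> by (intro card_mono) auto
  have "card R = w - 2"
    unfolding R_def w_def using \<open>finite S\<close> two by (simp add: card_Diff_subset_Int Int_commute)
  then obtain u where "bij_betw u {1..w-2} R"
    using ex_bij_betw_nat_finite_1[of R] \<open>finite S\<close> unfolding R_def by auto
  then have u_image: "u ` {1..w-2} = R" and inj_u: "inj_on u {1..w-2}"
    by (simp_all add: bij_betw_def)
  have "bij_betw ((!) xs) {0..l} (set xs)"
    using p t unfolding induced_path_def l_def by (intro bij_betw_nth) auto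
  then have nth_image: "(!) xs ` {0..l} = set xs" and inj_nth: "inj_on ((!) xs) {0..l}"
    by (simp_all add: bij_betw_def)
  have clique_eq: "{xs ! t, xs ! (t + 1)} \<union> u ` {1..w-2} = S"
    using ends unfolding u_image R_def by blast
  have path_eq: "{{xs ! i, xs ! (i + 1)} | i. i + 1 < length xs} = {{xs ! i, xs ! (i + 1)} | i. i < l}"
    unfolding l_def by (metis less_diff_conv)
  have "WL_decomposition V E l w t ((!) xs) u H"
  proof
    show "1 \<le> l" "t < l" using t unfolding l_def by auto
    show "2 \<le> w" "inj_on ((!) xs) {0..l}" "inj_on u {1..w-2}" by fact+
    show "(!) xs ` {0..l} \<inter> u ` {1..w-2} = {}" "V = (!) xs ` {0..l} \<union> u ` {1..w-2}"
      using cover unfolding nth_image u_image R_def by auto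
    show "H \<subseteq> {{xs ! i, u j} | i j. i \<le> l \<and> 1 \<le> j \<and> j \<le> w - 2}"
      unfolding H_def using nth_image u_image by fastforce
    show "E = {{xs ! i, xs ! (i + 1)} | i. i < l}
           \<union> {{x, y} | x y. x \<in> {xs ! t, xs ! (t + 1)} \<union> u ` {1..w-2} \<and>
                             y \<in> {xs ! t, xs ! (t + 1)} \<union> u ` {1..w-2} \<and> x \<noteq> y}
           \<union> H"
      unfolding clique_eq path_eq[symmetric] H_def R_def
      by (rule edges_of_induced_path_and_clique_cover[OF s p c cover])
  qed
  then show ?thesis using WL_graph_iff_decomposition by blast
qed

lemma WL_graph_if_longest_induced_path_plus_clique_number_eq:
  assumes "simple_graph V E" and "V \<noteq> {}"
    and "longest_induced_path V E + clique_number V E = card V + 1"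
  shows "WL_graph V E"
proof -
  obtain xs where xs: "induced_path V E xs" "longest_induced_path V E = length xs - 1"
    using longest_induced_pathE[OF assms(1,2)] .
  obtain S where S: "clique V E S" "clique_number V E = card S"
    using clique_numberE[OF simple_graph_finite[OF assms(1)]] .
  have "0 < length xs" using xs(1) unfolding induced_path_def by blast
  then have "length xs + card S = card V + 2" using assms(3) xs(2) S(2) by linarith
  then show ?thesis by (rule WL_graph_if_extremal[OF assms(1) xs(1) S(1)])
qed

theorem theorem3p3:
  fixes V :: "'a set" and E :: "'a set set"
  assumes "simple_graph V E" and "connected_graph V E"
  shows "longest_induced_path V E = card V - clique_number V E + 1 \<longleftrightarrow> WL_graph V E"
proof -
  \<comment> \<open>Connectivity is needed only for this.\<close>
  have nonempty: "V \<noteq> {}" using assms(2) unfolding connected_graph_def by blast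
  have "clique_number V E \<le> card V"
    using clique_number_le_card[OF simple_graph_finite[OF assms(1)]] .
  then have "longest_induced_path V E = card V - clique_number V E + 1 \<longleftrightarrow>
      longest_induced_path V E + clique_number V E = card V + 1"
    by linarith
  also have "\<dots> \<longleftrightarrow> WL_graph V E"
  proof
    assume "longest_induced_path V E + clique_number V E = card V + 1"
    with assms(1) nonempty show "WL_graph V E"
      by (rule WL_graph_if_longest_induced_path_plus_clique_number_eq)
  next
    assume "WL_graph V E"
    then obtain l w t v u H where "WL_decomposition V E l w t v u H"
      unfolding WL_graph_iff_decomposition by blast
    then show "longest_induced_path V E + clique_number V E = card V + 1"
      by (rule WL_decomposition.longest_induced_path_plus_clique_number[OF _ assms(1)])
  qed
  finally show ?thesis .
qed

end
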